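(* Let $\Bbbk$ be a field of characteristic zero and $n \ge 1$. Let $\mathrm{Se}_n$ be the Sergeev algebra and $e_{(n)}, e_{(1^n)} \in \mathrm{Se}_n$ as in the context. Then there is an isomorphism of $\mathbb{Z}/2\mathbb{Z}$-graded left $\mathrm{Se}_n$-modules $\mathrm{Se}_n e_{(n)} \cong \mathrm{Se}_n e_{(1^n)}\{n\}$.
   Context: $\mathrm{Cliff}_n$ is the $\Bbbk$-algebra with generators $c_1,\dots,c_n$ and relations $c_i^2=-1$ and $c_ic_j=-c_jc_i$ for $i\neq j$. The Sergeev algebra is $\mathrm{Se}_n = \mathrm{Cliff}_n \rtimes \Bbbk[S_n]$, where $S_n$ acts on $\mathrm{Cliff}_n$ by permuting the generators ($w c_i w^{-1} = c_{w(i)}$). It is $\mathbb{Z}/2\mathbb{Z}$-graded with $c_i$ odd and the simple transpositions $s_1,\dots,s_{n-1}$ even. $e_{(n)} = \frac{1}{n!}\sum_{w \in S_n} w$ and $e_{(1^n)} = \frac{1}{n!}\sum_{w\in S_n} (-1)^{\ell(w)} w$, where $\ell$ is the length function. For a graded module $M$, $M\{k\}$ denotes $M$ with its $\mathbb{Z}/2\mathbb{Z}$-grading shifted by $k \bmod 2$. *)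

theory Defs
  imports "HOL-Combinatorics.Permutations"
begin

text \<open>Concrete model of the Sergeev algebra Se_n = Cliff_n \<rtimes> k[S_n].
  The generators are indexed by 0,...,n-1.  An element of Se_n is a coefficient
  function on the standard basis c_A w, where A is a subset of {0..<n}
  (c_A = c_{a_1} ... c_{a_k} with a_1 < ... < a_k) and w is a permutation of {0..<n}.\<close>

definition se_basis :: "nat \<Rightarrow> (nat set \<times> (nat \<Rightarrow> nat)) set" where
  "se_basis n = {(A, w). A \<subseteq> {..<n} \<and> w permutes {..<n}}"

type_synonym 'k se = "nat set \<times> (nat \<Rightarrow> nat) \<Rightarrow> 'k"

definition se_carrier :: "nat \<Rightarrow> ('k::field) se set" where
  "se_carrier n = {x. \<forall>b. b \<notin> se_basis n \<longrightarrow> x b = 0}"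

text \<open>c_A c_B = (-1)^(#{(a,b) in A x B. b < a} + |A \<inter> B|) c_{A \<triangle> B}
  (from c_i^2 = -1 and c_i c_j = - c_j c_i).\<close>
definition clif_sign :: "nat set \<Rightarrow> nat set \<Rightarrow> 'k::field" where
  "clif_sign A B = (-1) ^ (card {(a, b). a \<in> A \<and> b \<in> B \<and> b < a} + card (A \<inter> B))"

text \<open>w c_B w^{-1} = c_{w b_1} ... c_{w b_k} = (-1)^(inversions of w on B) c_{w(B)}.\<close>
definition conj_sign :: "(nat \<Rightarrow> nat) \<Rightarrow> nat set \<Rightarrow> 'k::field" where
  "conj_sign w B = (-1) ^ card {(b, b'). b \<in> B \<and> b' \<in> B \<and> b < b' \<and> w b' < w b}"

text \<open>(c_A w)(c_B v) = c_A (w c_B w^{-1}) w v.\<close>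
definition se_bmul :: "nat set \<times> (nat \<Rightarrow> nat) \<Rightarrow> nat set \<times> (nat \<Rightarrow> nat)
    \<Rightarrow> 'k::field \<times> (nat set \<times> (nat \<Rightarrow> nat))" where
  "se_bmul p q = (case p of (A, w) \<Rightarrow> case q of (B, v) \<Rightarrow>
     (conj_sign w B * clif_sign A (w ` B), ((A - w ` B) \<union> (w ` B - A), w \<circ> v)))"

definition se_mult :: "nat \<Rightarrow> ('k::field) se \<Rightarrow> 'k se \<Rightarrow> 'k se" where
  "se_mult n x y = (\<lambda>c. \<Sum>(p, q) \<in> se_basis n \<times> se_basis n.
      (case se_bmul p q of (s, r) \<Rightarrow> if r = c then s * x p * y q else 0))"

definition se_add :: "('k::field) se \<Rightarrow> 'k se \<Rightarrow> 'k se" where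
  "se_add x y = (\<lambda>c. x c + y c)"

definition se_smult :: "'k::field \<Rightarrow> 'k se \<Rightarrow> 'k se" where
  "se_smult a x = (\<lambda>c. a * x c)"

text \<open>Z/2-grading: c_i odd, permutations even; x is homogeneous of degree d (mod 2).\<close>
definition se_homog :: "nat \<Rightarrow> nat \<Rightarrow> ('k::field) se \<Rightarrow> bool" where
  "se_homog n d x \<longleftrightarrow> x \<in> se_carrier n \<and> (\<forall>A w. x (A, w) \<noteq> 0 \<longrightarrow> even (card A + d))"

text \<open>Length of w in S_n (Coxeter length w.r.t. simple transpositions) = number of inversions.\<close>
definition perm_length :: "nat \<Rightarrow> (nat \<Rightarrow> nat) \<Rightarrow> nat" where
  "perm_length n w = card {(i, j). i < j \<and> j < n \<and> w j < w i}"

definition e_triv :: "nat \<Rightarrow> ('k::field) se" where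
  "e_triv n = (\<lambda>(A, w). if A = {} \<and> w permutes {..<n} then 1 / of_nat (fact n) else 0)"

definition e_sgn :: "nat \<Rightarrow> ('k::field) se" where
  "e_sgn n = (\<lambda>(A, w). if A = {} \<and> w permutes {..<n}
      then (-1) ^ perm_length n w / of_nat (fact n) else 0)"

definition se_left_ideal :: "nat \<Rightarrow> ('k::field) se \<Rightarrow> 'k se set" where
  "se_left_ideal n e = {se_mult n x e | x. x \<in> se_carrier n}"

end

theory Submission
  imports Defs
begin

text \<open>Right multiplication by the volume element \<open>c\<^sub>N = c\<^sub>0 c\<^sub>1 \<cdots> c\<^sub>n\<^sub>-\<^sub>1\<close> commutes with
  the left \<open>Se\<^sub>n\<close>-action, shifts the degree by \<open>n\<close>, and is invertible because
  \<open>c\<^sub>N\<^sup>2 = \<plusminus>1\<close>. Since \<open>w c\<^sub>N w\<inverse> = sgn(w) c\<^sub>N\<close>, it maps the elements \<open>y\<close> with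
  \<open>y w = y\<close> for all \<open>w \<in> S\<^sub>n\<close>, which form \<open>Se\<^sub>n e\<^sub>(\<^sub>n\<^sub>)\<close>, onto those with
  \<open>y w = sgn(w) y\<close>, which form \<open>Se\<^sub>n e\<^sub>(\<^sub>1\<^sup>n\<^sub>)\<close>. In the coefficient model of \<open>Se\<^sub>n\<close>
  all the work lies in the signs: that right multiplication by \<open>c\<^sub>N\<close> commutes with left
  multiplication becomes a parity identity between inversion counts and Clifford reordering signs.\<close>

section \<open>Counting pairs below \<open>n\<close>\<close>

definition pair_count :: "nat \<Rightarrow> (nat \<Rightarrow> nat \<Rightarrow> bool) \<Rightarrow> nat" where
  "pair_count n P = card {(x, y). x < n \<and> y < n \<and> P x y}"

lemma finite_pairs_below: "finite {(x, y). x < (n::nat) \<and> y < n \<and> P x y}"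
  by (rule finite_subset[of _ "{..<n} \<times> {..<n}"]) auto

lemma pair_count_split:
  "pair_count n P = pair_count n (\<lambda>x y. P x y \<and> Q x y) + pair_count n (\<lambda>x y. P x y \<and> \<not> Q x y)"
proof -
  have "{(x, y). x < n \<and> y < n \<and> P x y} =
      {(x, y). x < n \<and> y < n \<and> P x y \<and> Q x y} \<union> {(x, y). x < n \<and> y < n \<and> P x y \<and> \<not> Q x y}"
    by auto
  then show ?thesis
    unfolding pair_count_def by (simp add: card_Un_disjoint finite_pairs_below disjoint_iff)
qed

lemma pair_count_cong:
  "(\<And>x y. x < n \<Longrightarrow> y < n \<Longrightarrow> P x y \<longleftrightarrow> Q x y) \<Longrightarrow> pair_count n P = pair_count n Q"
  unfolding pair_count_def by (rule arg_cong[where f = card]) auto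

lemma pair_count_swap: "pair_count n P = pair_count n (\<lambda>x y. P y x)"
proof -
  have "{(x, y). x < n \<and> y < n \<and> P x y} = prod.swap ` {(x, y). x < n \<and> y < n \<and> P y x}"
    by auto
  then show ?thesis unfolding pair_count_def by (simp add: card_image)
qed

lemma pair_count_permute:
  assumes w: "w permutes {..<n}"
  shows "pair_count n P = pair_count n (\<lambda>x y. P (w x) (w y))"
proof -
  have below: "w x < n \<longleftrightarrow> x < n" for x
    using permutes_in_image[OF w] by simp
  have "{(x, y). x < n \<and> y < n \<and> P x y} = map_prod w w ` {(x, y). x < n \<and> y < n \<and> P (w x) (w y)}"
  proof (intro set_eqI iffI)
    fix z assume "z \<in> {(x, y). x < n \<and> y < n \<and> P x y}"
    then obtain a b where "z = (a, b)" "a < n" "b < n" "P a b" by auto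
    moreover have "w (inv w a) = a" "w (inv w b) = b"
      using permutes_inverses(1)[OF w] by auto
    ultimately show "z \<in> map_prod w w ` {(x, y). x < n \<and> y < n \<and> P (w x) (w y)}"
      using below[of "inv w a"] below[of "inv w b"]
      by (intro image_eqI[of _ _ "(inv w a, inv w b)"]) simp_all
  qed (auto simp: below)
  moreover have "inj (map_prod w w)"
    using prod.inj_map permutes_inj[OF w] by blast
  ultimately show ?thesis
    unfolding pair_count_def by (simp add: card_image inj_on_subset[of _ UNIV])
qed

lemma pair_count_disagree:
  "pair_count n (\<lambda>x y. P x y \<and> Q x y) + pair_count n (\<lambda>x y. P x y \<and> R x y)
   = pair_count n (\<lambda>x y. P x y \<and> Q x y \<noteq> R x y) + 2 * pair_count n (\<lambda>x y. P x y \<and> Q x y \<and> R x y)"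
proof -
  have "pair_count n (\<lambda>x y. P x y \<and> Q x y) =
      pair_count n (\<lambda>x y. P x y \<and> Q x y \<and> R x y) + pair_count n (\<lambda>x y. P x y \<and> Q x y \<and> \<not> R x y)"
    unfolding conj_assoc[symmetric] by (rule pair_count_split)
  moreover have "pair_count n (\<lambda>x y. P x y \<and> R x y) =
      pair_count n (\<lambda>x y. P x y \<and> R x y \<and> Q x y) + pair_count n (\<lambda>x y. P x y \<and> R x y \<and> \<not> Q x y)"
    unfolding conj_assoc[symmetric] by (rule pair_count_split)
  moreover have "pair_count n (\<lambda>x y. P x y \<and> R x y \<and> Q x y) = pair_count n (\<lambda>x y. P x y \<and> Q x y \<and> R x y)"
    by (rule pair_count_cong) blast
  moreover have "pair_count n (\<lambda>x y. P x y \<and> Q x y \<noteq> R x y) =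
      pair_count n (\<lambda>x y. P x y \<and> Q x y \<and> \<not> R x y) + pair_count n (\<lambda>x y. P x y \<and> R x y \<and> \<not> Q x y)"
  proof -
    have "pair_count n (\<lambda>x y. P x y \<and> Q x y \<noteq> R x y) =
        pair_count n (\<lambda>x y. (P x y \<and> Q x y \<noteq> R x y) \<and> Q x y) + pair_count n (\<lambda>x y. (P x y \<and> Q x y \<noteq> R x y) \<and> \<not> Q x y)"
      by (rule pair_count_split)
    also have "pair_count n (\<lambda>x y. (P x y \<and> Q x y \<noteq> R x y) \<and> Q x y) = pair_count n (\<lambda>x y. P x y \<and> Q x y \<and> \<not> R x y)"
      by (rule pair_count_cong) blast
    also have "pair_count n (\<lambda>x y. (P x y \<and> Q x y \<noteq> R x y) \<and> \<not> Q x y) = pair_count n (\<lambda>x y. P x y \<and> R x y \<and> \<not> Q x y)"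
      by (rule pair_count_cong) blast
    finally show ?thesis .
  qed
  ultimately show ?thesis by simp
qed

lemma minus_one_power_eq_if_even_add:
  "even (a + b) \<Longrightarrow> (-1 :: 'a::ring_1) ^ a = (-1) ^ b"
  by (auto simp: minus_one_power_iff)

lemma minus_one_power_card_sym_diff:
  assumes "finite A" "finite B"
  shows "(-1 :: 'a::ring_1) ^ card ((A - B) \<union> (B - A)) = (-1) ^ card A * (-1) ^ card B"
proof -
  have "card ((A - B) \<union> (B - A)) = card (A - B) + card (B - A)"
    using assms by (intro card_Un_disjoint) auto
  moreover have "card A = card (A \<inter> B) + card (A - B)"
    using assms(1) by (rule card_Int_Diff)
  moreover have "card B = card (A \<inter> B) + card (B - A)"
    using card_Int_Diff[OF assms(2), of A] by (simp add: Int_commute)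
  ultimately have "even (card ((A - B) \<union> (B - A)) + (card A + card B))"
    by presburger
  then have "(-1 :: 'a) ^ card ((A - B) \<union> (B - A)) = (-1) ^ (card A + card B)"
    by (rule minus_one_power_eq_if_even_add)
  then show ?thesis
    by (simp only: power_add)
qed

lemma inj_not_less_iff: "inj f \<Longrightarrow> \<not> f x < f y \<longleftrightarrow> f y < (f x :: 'b::linorder) \<or> x = y"
  by (metis injD not_less_iff_gr_or_eq)

section \<open>Signs of permutations and of Clifford monomials\<close>

definition perm_sign :: "nat \<Rightarrow> (nat \<Rightarrow> nat) \<Rightarrow> 'a::ring_1" where
  "perm_sign n w = (-1) ^ perm_length n w"

lemma perm_length_eq_pair_count: "perm_length n w = pair_count n (\<lambda>x y. x < y \<and> w y < w x)"
  unfolding perm_length_def pair_count_def by (rule arg_cong[where f = card]) auto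

lemma perm_sign_id: "perm_sign n id = 1"
proof -
  have empty: "{(i, j). i < j \<and> j < n \<and> j < (i::nat)} = {}" by auto
  show ?thesis unfolding perm_sign_def perm_length_def by (simp add: empty)
qed

lemma perm_sign_square: "perm_sign n w * perm_sign n w = (1::'a::ring_1)"
  unfolding perm_sign_def power_add[symmetric] by simp

lemma perm_sign_compose:
  assumes w: "w permutes {..<n}" and v: "v permutes {..<n}"
  shows "perm_sign n (w \<circ> v) = perm_sign n w * perm_sign n v"
proof -
  have inj: "inj w" "inj v" using w v by (simp_all add: permutes_inj)
  define a where "a = pair_count n (\<lambda>x y. x < y \<and> v x < v y \<and> w (v y) < w (v x))"
  define b where "b = pair_count n (\<lambda>x y. x < y \<and> v y < v x \<and> w (v y) < w (v x))"
  define c where "c = pair_count n (\<lambda>x y. x < y \<and> v y < v x \<and> w (v x) < w (v y))"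
  have "perm_length n (w \<circ> v) = a + b"
    unfolding perm_length_eq_pair_count a_def b_def
    by (subst pair_count_split[where Q = "\<lambda>x y. v x < v y"], intro arg_cong2[where f = "(+)"])
      (rule pair_count_cong; use inj in \<open>auto simp: inj_not_less_iff elim: less_asym'\<close>)+
  moreover have "perm_length n v = b + c"
    unfolding perm_length_eq_pair_count b_def c_def
    by (subst pair_count_split[where Q = "\<lambda>x y. w (v y) < w (v x)"], intro arg_cong2[where f = "(+)"])
      (rule pair_count_cong; use inj in \<open>auto simp: inj_not_less_iff elim: less_asym'\<close>)+
  moreover have "perm_length n w = a + c"
  proof -
    have "perm_length n w = pair_count n (\<lambda>x y. v x < v y \<and> w (v y) < w (v x))"
      unfolding perm_length_eq_pair_count by (rule pair_count_permute[OF v])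
    also have "\<dots> = pair_count n (\<lambda>x y. (v x < v y \<and> w (v y) < w (v x)) \<and> x < y)
        + pair_count n (\<lambda>x y. (v y < v x \<and> w (v x) < w (v y)) \<and> \<not> y < x)"
      by (subst pair_count_split[where Q = "\<lambda>x y. x < y"], subst (2) pair_count_swap) (rule refl)
    also have "\<dots> = a + c"
      unfolding a_def c_def
      by (intro arg_cong2[where f = "(+)"] pair_count_cong)
        (use inj in \<open>auto simp: inj_eq linorder_not_less order.order_iff_strict\<close>)
    finally show ?thesis .
  qed
  ultimately have "even (perm_length n (w \<circ> v) + (perm_length n w + perm_length n v))"
    by presburger
  then show ?thesis
    unfolding perm_sign_def power_add[symmetric] by (rule minus_one_power_eq_if_even_add)
qed

lemma pair_count_inversions_by_subset:
  "pair_count n (\<lambda>x y. x < y \<and> w y < w x) =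
     pair_count n (\<lambda>x y. x \<in> B \<and> y \<in> B \<and> x < y \<and> w y < w x)
   + pair_count n (\<lambda>x y. x \<notin> B \<and> y \<notin> B \<and> x < y \<and> w y < w x)
   + pair_count n (\<lambda>x y. x < y \<and> w y < w x \<and> (x \<in> B) \<noteq> (y \<in> B))"
proof -
  have "pair_count n (\<lambda>x y. x < y \<and> w y < w x) =
      pair_count n (\<lambda>x y. (x < y \<and> w y < w x) \<and> (x \<in> B \<longleftrightarrow> y \<in> B))
    + pair_count n (\<lambda>x y. (x < y \<and> w y < w x) \<and> (x \<in> B) \<noteq> (y \<in> B))"
    by (rule pair_count_split)
  also have "pair_count n (\<lambda>x y. (x < y \<and> w y < w x) \<and> (x \<in> B \<longleftrightarrow> y \<in> B)) =
      pair_count n (\<lambda>x y. ((x < y \<and> w y < w x) \<and> (x \<in> B \<longleftrightarrow> y \<in> B)) \<and> x \<in> B)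
    + pair_count n (\<lambda>x y. ((x < y \<and> w y < w x) \<and> (x \<in> B \<longleftrightarrow> y \<in> B)) \<and> x \<notin> B)"
    by (rule pair_count_split)
  also have "pair_count n (\<lambda>x y. ((x < y \<and> w y < w x) \<and> (x \<in> B \<longleftrightarrow> y \<in> B)) \<and> x \<in> B)
      = pair_count n (\<lambda>x y. x \<in> B \<and> y \<in> B \<and> x < y \<and> w y < w x)"
    by (rule pair_count_cong) blast
  also have "pair_count n (\<lambda>x y. ((x < y \<and> w y < w x) \<and> (x \<in> B \<longleftrightarrow> y \<in> B)) \<and> x \<notin> B)
      = pair_count n (\<lambda>x y. x \<notin> B \<and> y \<notin> B \<and> x < y \<and> w y < w x)"
    by (rule pair_count_cong) blast
  finally show ?thesis by (simp add: conj_assoc)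
qed

lemma pair_count_order_disagree_within:
  fixes w :: "nat \<Rightarrow> 'b::linorder"
  assumes "inj w"
  shows "pair_count n (\<lambda>x y. x \<in> B \<and> y \<in> B \<and> (y < x) \<noteq> (w y < w x))
    = 2 * pair_count n (\<lambda>x y. x \<in> B \<and> y \<in> B \<and> x < y \<and> w y < w x)"
proof -
  have "pair_count n (\<lambda>x y. x \<in> B \<and> y \<in> B \<and> (y < x) \<noteq> (w y < w x)) =
      pair_count n (\<lambda>x y. (x \<in> B \<and> y \<in> B \<and> (y < x) \<noteq> (w y < w x)) \<and> x < y)
    + pair_count n (\<lambda>x y. (y \<in> B \<and> x \<in> B \<and> (x < y) \<noteq> (w x < w y)) \<and> \<not> y < x)"
    by (subst pair_count_split[where Q = "\<lambda>x y. x < y"], subst (2) pair_count_swap) (rule refl)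
  also have "\<dots> = pair_count n (\<lambda>x y. x \<in> B \<and> y \<in> B \<and> x < y \<and> w y < w x)
    + pair_count n (\<lambda>x y. x \<in> B \<and> y \<in> B \<and> x < y \<and> w y < w x)"
    by (intro arg_cong2[where f = "(+)"] pair_count_cong)
      (use assms in \<open>auto simp: inj_not_less_iff elim: less_asym'\<close>)
  finally show ?thesis by simp
qed

lemma pair_count_order_disagree_across:
  fixes w :: "nat \<Rightarrow> 'b::linorder"
  assumes "inj w"
  shows "pair_count n (\<lambda>x y. x \<in> B \<and> y \<notin> B \<and> (y < x) \<noteq> (w y < w x))
    = pair_count n (\<lambda>x y. x < y \<and> w y < w x \<and> (x \<in> B) \<noteq> (y \<in> B))"
proof -
  have "pair_count n (\<lambda>x y. x \<in> B \<and> y \<notin> B \<and> (y < x) \<noteq> (w y < w x)) =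
      pair_count n (\<lambda>x y. (x \<in> B \<and> y \<notin> B \<and> (y < x) \<noteq> (w y < w x)) \<and> x < y)
    + pair_count n (\<lambda>x y. (y \<in> B \<and> x \<notin> B \<and> (x < y) \<noteq> (w x < w y)) \<and> \<not> y < x)"
    by (subst pair_count_split[where Q = "\<lambda>x y. x < y"], subst (2) pair_count_swap) (rule refl)
  also have "\<dots> = pair_count n (\<lambda>x y. (x < y \<and> w y < w x \<and> (x \<in> B) \<noteq> (y \<in> B)) \<and> x \<in> B)
    + pair_count n (\<lambda>x y. (x < y \<and> w y < w x \<and> (x \<in> B) \<noteq> (y \<in> B)) \<and> x \<notin> B)"
    by (intro arg_cong2[where f = "(+)"] pair_count_cong)
      (use assms in \<open>auto simp: inj_not_less_iff elim: less_asym'\<close>)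
  also have "\<dots> = pair_count n (\<lambda>x y. x < y \<and> w y < w x \<and> (x \<in> B) \<noteq> (y \<in> B))"
    by (rule pair_count_split[symmetric])
  finally show ?thesis .
qed

text \<open>Modulo 2, both the inversions between \<open>B\<close> and its complement and the last two counts
  count the pairs \<open>(x, y)\<close> with \<open>x \<in> B\<close> on which \<open>y < x\<close> and \<open>w y < w x\<close> disagree.\<close>
lemma even_crossing_inversions:
  fixes w :: "nat \<Rightarrow> 'b::linorder"
  assumes "inj w"
  shows "even (pair_count n (\<lambda>x y. x < y \<and> w y < w x \<and> (x \<in> B) \<noteq> (y \<in> B))
      + pair_count n (\<lambda>x y. x \<in> B \<and> y < x) + pair_count n (\<lambda>x y. x \<in> B \<and> w y < w x))"
proof -
  have "pair_count n (\<lambda>x y. x \<in> B \<and> (y < x) \<noteq> (w y < w x)) =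
      pair_count n (\<lambda>x y. x \<in> B \<and> y \<in> B \<and> (y < x) \<noteq> (w y < w x))
    + pair_count n (\<lambda>x y. x \<in> B \<and> y \<notin> B \<and> (y < x) \<noteq> (w y < w x))"
    by (subst pair_count_split[where Q = "\<lambda>x y. y \<in> B"], intro arg_cong2[where f = "(+)"])
      (rule pair_count_cong; blast)+
  then show ?thesis
    using pair_count_disagree[of n "\<lambda>x y. x \<in> B" "\<lambda>x y. y < x" "\<lambda>x y. w y < w x"]
      pair_count_order_disagree_within[OF assms, of n B] pair_count_order_disagree_across[OF assms, of n B]
    by presburger
qed

lemma conj_sign_eq_pair_count:
  "B \<subseteq> {..<n} \<Longrightarrow> conj_sign w B = (-1) ^ pair_count n (\<lambda>x y. x \<in> B \<and> y \<in> B \<and> x < y \<and> w y < w x)"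
  unfolding conj_sign_def pair_count_def by (rule arg_cong[where f = "\<lambda>k. (-1) ^ card k"]) auto

lemma clif_sign_lessThan_eq_pair_count:
  "A \<subseteq> {..<n} \<Longrightarrow> clif_sign A {..<n} = (-1) ^ (pair_count n (\<lambda>x y. x \<in> A \<and> y < x) + card A)"
  unfolding clif_sign_def pair_count_def
  by (rule arg_cong2[where f = "\<lambda>P k. (-1) ^ (card P + k)"]) (auto simp: Int_absorb2)

lemma perm_sign_mult_conj_signs:
  assumes w: "w permutes {..<n}" and B: "B \<subseteq> {..<n}"
  shows "perm_sign n w * conj_sign w B * conj_sign w ({..<n} - B)
    = (clif_sign B {..<n} * clif_sign (w ` B) {..<n} :: 'a::field)"
proof -
  have inj: "inj w" using w by (rule permutes_inj)
  have wB: "w ` B \<subseteq> {..<n}" using B permutes_image[OF w] by blast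
  have compl: "pair_count n (\<lambda>x y. x \<in> {..<n} - B \<and> y \<in> {..<n} - B \<and> x < y \<and> w y < w x)
      = pair_count n (\<lambda>x y. x \<notin> B \<and> y \<notin> B \<and> x < y \<and> w y < w x)"
    by (rule pair_count_cong) auto
  have image: "pair_count n (\<lambda>x y. x \<in> w ` B \<and> y < x) = pair_count n (\<lambda>x y. x \<in> B \<and> w y < w x)"
    using pair_count_permute[OF w, of "\<lambda>x y. x \<in> w ` B \<and> y < x"] inj by (simp add: inj_image_mem_iff)
  have card: "card (w ` B) = card B"
    using inj by (simp add: card_image inj_on_subset[of _ UNIV])
  have lhs: "perm_sign n w * conj_sign w B * conj_sign w ({..<n} - B) = (-1 :: 'a) ^
      (perm_length n w + pair_count n (\<lambda>x y. x \<in> B \<and> y \<in> B \<and> x < y \<and> w y < w x)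
        + pair_count n (\<lambda>x y. x \<notin> B \<and> y \<notin> B \<and> x < y \<and> w y < w x))"
    unfolding perm_sign_def conj_sign_eq_pair_count[OF B] conj_sign_eq_pair_count[OF Diff_subset] compl
    by (simp only: power_add)
  have rhs: "clif_sign B {..<n} * clif_sign (w ` B) {..<n} = (-1 :: 'a) ^
      ((pair_count n (\<lambda>x y. x \<in> B \<and> y < x) + card B)
        + (pair_count n (\<lambda>x y. x \<in> B \<and> w y < w x) + card B))"
    unfolding clif_sign_lessThan_eq_pair_count[OF B] clif_sign_lessThan_eq_pair_count[OF wB] image card
    by (simp only: power_add)
  have "even (perm_length n w
      + pair_count n (\<lambda>x y. x \<in> B \<and> y \<in> B \<and> x < y \<and> w y < w x)
      + pair_count n (\<lambda>x y. x \<notin> B \<and> y \<notin> B \<and> x < y \<and> w y < w x)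
      + ((pair_count n (\<lambda>x y. x \<in> B \<and> y < x) + card B)
        + (pair_count n (\<lambda>x y. x \<in> B \<and> w y < w x) + card B)))"
    using pair_count_inversions_by_subset[of n w B] even_crossing_inversions[OF inj, of n B]
    unfolding perm_length_eq_pair_count by presburger
  then show ?thesis
    unfolding lhs rhs by (rule minus_one_power_eq_if_even_add)
qed

lemma clif_sign_square: "clif_sign X Y * clif_sign X Y = (1::'a::field)"
  unfolding clif_sign_def power_add[symmetric] by simp

lemma clif_sign_sym_diff_left:
  assumes "finite X" "finite Y" "finite Z"
  shows "clif_sign ((X - Y) \<union> (Y - X)) Z = (clif_sign X Z * clif_sign Y Z :: 'a::field)"
proof -
  define P where "P S = {(a, b). a \<in> S \<and> b \<in> Z \<and> b < a}" for S :: "nat set"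
  have fin: "finite (P S)" if "finite S" for S
    by (rule finite_subset[of _ "S \<times> Z"]) (auto simp: P_def that assms(3))
  have "P ((X - Y) \<union> (Y - X)) = (P X - P Y) \<union> (P Y - P X)"
    unfolding P_def by auto
  moreover have "((X - Y) \<union> (Y - X)) \<inter> Z = ((X \<inter> Z) - (Y \<inter> Z)) \<union> ((Y \<inter> Z) - (X \<inter> Z))"
    by auto
  ultimately show ?thesis
    unfolding clif_sign_def P_def[symmetric] power_add
    using minus_one_power_card_sym_diff[OF fin[OF assms(1)] fin[OF assms(2)], where 'a = 'a]
      minus_one_power_card_sym_diff[of "X \<inter> Z" "Y \<inter> Z", where 'a = 'a] assms
    by (simp add: mult_ac)
qed

lemma clif_sign_sym_diff_right:
  assumes "finite X" "finite Y" "finite Z"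
  shows "clif_sign X ((Y - Z) \<union> (Z - Y)) = (clif_sign X Y * clif_sign X Z :: 'a::field)"
proof -
  define P where "P S = {(a, b). a \<in> X \<and> b \<in> S \<and> b < a}" for S :: "nat set"
  have fin: "finite (P S)" if "finite S" for S
    by (rule finite_subset[of _ "X \<times> S"]) (auto simp: P_def that assms(1))
  have "P ((Y - Z) \<union> (Z - Y)) = (P Y - P Z) \<union> (P Z - P Y)"
    unfolding P_def by auto
  moreover have "X \<inter> ((Y - Z) \<union> (Z - Y)) = ((X \<inter> Y) - (X \<inter> Z)) \<union> ((X \<inter> Z) - (X \<inter> Y))"
    by auto
  ultimately show ?thesis
    unfolding clif_sign_def P_def[symmetric] power_add
    using minus_one_power_card_sym_diff[OF fin[OF assms(2)] fin[OF assms(3)], where 'a = 'a]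
      minus_one_power_card_sym_diff[of "X \<inter> Y" "X \<inter> Z", where 'a = 'a] assms
    by (simp add: mult_ac)
qed

lemma conj_sign_square: "conj_sign w B * conj_sign w B = (1::'a::field)"
  unfolding conj_sign_def power_add[symmetric] by simp

text \<open>The signs of \<open>(c\<^sub>A w \<cdot> c\<^sub>B v) \<cdot> c\<^sub>N\<close> and \<open>c\<^sub>A w \<cdot> (c\<^sub>B v \<cdot> c\<^sub>N)\<close> agree, where
  \<open>N = {..<n}\<close>; the common factor \<open>perm_sign n v\<close> is cancelled.\<close>
lemma sign_assoc_mult_volume:
  assumes A: "A \<subseteq> {..<n}" and B: "B \<subseteq> {..<n}" and w: "w permutes {..<n}"
  shows "perm_sign n w * clif_sign ((A - w ` B) \<union> (w ` B - A)) {..<n} * conj_sign w B * clif_sign A (w ` B)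
    = (conj_sign w ({..<n} - B) * clif_sign A ({..<n} - w ` B) * clif_sign B {..<n} :: 'a::field)"
proof -
  define D where "D = w ` B"
  have D: "D \<subseteq> {..<n}" using B permutes_image[OF w] unfolding D_def by blast
  have fin: "finite A" "finite D" using A D finite_subset by blast+
  have partition: "(D - ({..<n} - D)) \<union> (({..<n} - D) - D) = {..<n}" using D by auto
  have "clif_sign ((A - D) \<union> (D - A)) {..<n} = (clif_sign A {..<n} * clif_sign D {..<n} :: 'a)"
    using fin by (intro clif_sign_sym_diff_left) auto
  moreover have "clif_sign A {..<n} = (clif_sign A D * clif_sign A ({..<n} - D) :: 'a)"
    using clif_sign_sym_diff_right[of A D "{..<n} - D"] fin unfolding partition by simp
  moreover have "perm_sign n w * conj_sign w B * conj_sign w ({..<n} - B)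
      = (clif_sign B {..<n} * clif_sign D {..<n} :: 'a)"
    unfolding D_def by (rule perm_sign_mult_conj_signs[OF w B])
  moreover have "conj_sign w ({..<n} - B) * conj_sign w ({..<n} - B) = (1::'a)"
    by (rule conj_sign_square)
  moreover have "clif_sign A D * clif_sign A D = (1::'a)" "clif_sign D {..<n} * clif_sign D {..<n} = (1::'a)"
    by (rule clif_sign_square)+
  ultimately show ?thesis unfolding D_def[symmetric] by algebra
qed

section \<open>Right multiplication by the volume element\<close>

lemma se_basis_eq: "se_basis n = Pow {..<n} \<times> {w. w permutes {..<n}}"
  unfolding se_basis_def by auto

lemma se_bmul_in_se_basis:
  "p \<in> se_basis n \<Longrightarrow> q \<in> se_basis n \<Longrightarrow> snd (se_bmul p q :: 'a::field \<times> _) \<in> se_basis n"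
  unfolding se_bmul_def se_basis_def
  by (auto split: prod.splits simp: permutes_compose) (metis lessThan_iff permutes_in_image subsetD)+

lemma se_mult_in_se_carrier: "se_mult n x y \<in> se_carrier n"
  unfolding se_carrier_def
proof (intro CollectI allI impI)
  fix c assume c: "c \<notin> se_basis n"
  have "(case se_bmul p q of (s, r) \<Rightarrow> if r = c then s * x p * y q else 0) = 0"
    if "p \<in> se_basis n" "q \<in> se_basis n" for p q
    using se_bmul_in_se_basis[OF that, where 'a = 'a] c by (auto split: prod.splits)
  then show "se_mult n x y c = 0"
    unfolding se_mult_def by (auto intro: sum.neutral)
qed

lemma se_bmul_compl_right:
  assumes A: "A \<subseteq> {..<n}" and B: "B \<subseteq> {..<n}" and w: "w permutes {..<n}" and v: "v permutes {..<n}"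
  defines "X \<equiv> (A - w ` B) \<union> (w ` B - A)"
  shows "snd (se_bmul (A, w) ({..<n} - B, v)) = ({..<n} - X, w \<circ> v)"
    and "fst (se_bmul (A, w) ({..<n} - B, v)) * (perm_sign n v * clif_sign B {..<n})
      = perm_sign n (w \<circ> v) * clif_sign X {..<n} * fst (se_bmul (A, w) (B, v) :: 'a::field \<times> _)"
proof -
  have image: "w ` ({..<n} - B) = {..<n} - w ` B"
    using permutes_inj[OF w] permutes_image[OF w] by (simp add: image_set_diff)
  have "w ` B \<subseteq> {..<n}" using B permutes_image[OF w] by blast
  then show "snd (se_bmul (A, w) ({..<n} - B, v)) = ({..<n} - X, w \<circ> v)"
    using A by (auto simp: se_bmul_def X_def image)
  show "fst (se_bmul (A, w) ({..<n} - B, v)) * (perm_sign n v * clif_sign B {..<n})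
      = perm_sign n (w \<circ> v) * clif_sign X {..<n} * fst (se_bmul (A, w) (B, v) :: 'a \<times> _)"
    using sign_assoc_mult_volume[OF A B w, where 'a = 'a]
    by (simp add: se_bmul_def X_def image perm_sign_compose[OF w v] mult_ac)
qed

text \<open>Right multiplication by \<open>c\<^sub>N = c\<^sub>0 c\<^sub>1 \<cdots> c\<^sub>n\<^sub>-\<^sub>1\<close>: the conjugate \<open>u c\<^sub>N u\<inverse>\<close> is
  \<open>perm_sign n u \<cdot> c\<^sub>N\<close>, so \<open>c\<^sub>A u \<cdot> c\<^sub>N = perm_sign n u \<cdot> clif_sign A N \<cdot> c\<^sub>N\<^sub>-\<^sub>A u\<close>.\<close>
definition se_mult_volume :: "nat \<Rightarrow> ('a::field) se \<Rightarrow> 'a se" where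
  "se_mult_volume n m = (\<lambda>(C, u). if (C, u) \<in> se_basis n
     then perm_sign n u * clif_sign ({..<n} - C) {..<n} * m ({..<n} - C, u) else 0)"

lemma se_mult_volume_in_se_carrier: "se_mult_volume n m \<in> se_carrier n"
  unfolding se_carrier_def se_mult_volume_def by auto

lemma se_mult_volume_compl:
  assumes "(B, v) \<in> se_basis n"
  shows "se_mult_volume n m ({..<n} - B, v) = perm_sign n v * clif_sign B {..<n} * m (B, v)"
proof -
  have "({..<n} - B, v) \<in> se_basis n" "{..<n} - ({..<n} - B) = B"
    using assms unfolding se_basis_def by auto
  then show ?thesis unfolding se_mult_volume_def by simp
qed

lemma se_mult_volume_add: "se_mult_volume n (se_add m1 m2) = se_add (se_mult_volume n m1) (se_mult_volume n m2)"
  unfolding se_mult_volume_def se_add_def by (auto simp: distrib_left)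

lemma se_mult_volume_smult: "se_mult_volume n (se_smult a m) = se_smult a (se_mult_volume n m)"
  unfolding se_mult_volume_def se_smult_def by (auto simp: mult_ac)

lemma se_mult_volume_summand:
  assumes C: "(C, u) \<in> se_basis n" and p: "(A, w) \<in> se_basis n" and q: "(B, v) \<in> se_basis n"
  shows "perm_sign n u * clif_sign ({..<n} - C) {..<n} *
      (case se_bmul (A, w) (B, v) of (s, r) \<Rightarrow> if r = ({..<n} - C, u) then s * a * b else 0)
    = (case se_bmul (A, w) ({..<n} - B, v) of (s, r) \<Rightarrow>
      if r = (C, u) then s * a * (perm_sign n v * clif_sign B {..<n} * b) else (0::'a::field))"
proof -
  have C: "C \<subseteq> {..<n}" and A: "A \<subseteq> {..<n}" and w: "w permutes {..<n}"
    and B: "B \<subseteq> {..<n}" and v: "v permutes {..<n}"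
    using C p q unfolding se_basis_def by auto
  define X where "X = (A - w ` B) \<union> (w ` B - A)"
  have X: "X \<subseteq> {..<n}" using A B permutes_image[OF w] unfolding X_def by blast
  have prod: "snd (se_bmul (A, w) (B, v) :: 'a \<times> _) = (X, w \<circ> v)"
    unfolding se_bmul_def X_def by simp
  note compl = se_bmul_compl_right[OF A B w v, folded X_def]
  show ?thesis
  proof (cases "X = {..<n} - C \<and> u = w \<circ> v")
    case True
    then have "{..<n} - X = C" using C by auto
    then have "(case se_bmul (A, w) ({..<n} - B, v) of (s, r) \<Rightarrow>
        if r = (C, u) then s * a * (perm_sign n v * clif_sign B {..<n} * b) else 0)
      = (fst (se_bmul (A, w) ({..<n} - B, v)) * (perm_sign n v * clif_sign B {..<n})) * a * b"
      using True by (simp add: prod.case_eq_if compl(1) mult_ac)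
    also have "\<dots> = perm_sign n u * clif_sign ({..<n} - C) {..<n} * (fst (se_bmul (A, w) (B, v)) * a * b)"
      unfolding compl(2) using True by (simp add: mult_ac)
    also have "\<dots> = perm_sign n u * clif_sign ({..<n} - C) {..<n} *
        (case se_bmul (A, w) (B, v) of (s, r) \<Rightarrow> if r = ({..<n} - C, u) then s * a * b else 0)"
      using True by (simp add: prod.case_eq_if prod)
    finally show ?thesis by simp
  next
    case False
    then have "({..<n} - X, w \<circ> v) \<noteq> (C, u)" using X C by auto
    then show ?thesis
      using False by (auto simp: prod.case_eq_if prod compl(1))
  qed
qed

lemma se_mult_volume_mult: "se_mult_volume n (se_mult n x m) = se_mult n x (se_mult_volume n m)"
proof
  fix c :: "nat set \<times> (nat \<Rightarrow> nat)"
  obtain C u where c: "c = (C, u)" by fastforce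
  show "se_mult_volume n (se_mult n x m) c = se_mult n x (se_mult_volume n m) c"
  proof (cases "c \<in> se_basis n")
    case False
    then show ?thesis
      using se_mult_in_se_carrier[of n x "se_mult_volume n m"] unfolding se_mult_volume_def se_carrier_def c
      by auto
  next
    case True
    define S where "S = se_basis n"
    define F where "F p q = (case se_bmul p q of (s, r) \<Rightarrow>
      if r = (C, u) then s * x p * se_mult_volume n m q else 0)" for p q
    define G where "G p q = (case se_bmul p q of (s, r) \<Rightarrow>
      if r = ({..<n} - C, u) then s * x p * m q else 0)" for p q
    have summand: "perm_sign n u * clif_sign ({..<n} - C) {..<n} * G p q = F p ({..<n} - fst q, snd q)"
      if "p \<in> S" "q \<in> S" for p q
    proof -
      obtain A w B v where pq: "p = (A, w)" "q = (B, v)" by fastforce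
      show ?thesis
        using that se_mult_volume_summand[OF True[unfolded c], of A w B v "x (A, w)" "m (B, v)"]
        unfolding pq F_def G_def S_def by (simp add: prod.case_eq_if se_mult_volume_compl[OF that(2)[unfolded pq S_def]])
    qed
    have bij: "bij_betw (\<lambda>(p, q). (p, ({..<n} - fst q, snd q))) (S \<times> S) (S \<times> S)"
      by (rule bij_betw_byWitness[where f' = "\<lambda>(p, q). (p, ({..<n} - fst q, snd q))"])
        (auto simp: S_def se_basis_def)
    have "se_mult_volume n (se_mult n x m) c
        = (\<Sum>(p, q) \<in> S \<times> S. perm_sign n u * clif_sign ({..<n} - C) {..<n} * G p q)"
      using True unfolding c se_mult_volume_def se_mult_def G_def S_def
      by (simp add: sum_distrib_left case_prod_unfold)
    also have "\<dots> = (\<Sum>(p, q) \<in> S \<times> S. F p ({..<n} - fst q, snd q))"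
      by (rule sum.cong) (auto simp: summand)
    also have "\<dots> = (\<Sum>(p, q) \<in> S \<times> S. F p q)"
      using sum.reindex_bij_betw[OF bij, of "\<lambda>(p, q). F p q"] by (simp add: case_prod_unfold)
    also have "\<dots> = se_mult n x (se_mult_volume n m) c"
      unfolding c se_mult_def F_def S_def by simp
    finally show ?thesis .
  qed
qed

lemma se_mult_volume_twice:
  fixes y :: "'a::field se"
  assumes "y \<in> se_carrier n"
  shows "se_mult_volume n (se_mult_volume n y) = se_smult (clif_sign {..<n} {..<n}) y"
proof
  fix c :: "nat set \<times> (nat \<Rightarrow> nat)"
  obtain C u where c: "c = (C, u)" by fastforce
  show "se_mult_volume n (se_mult_volume n y) c = se_smult (clif_sign {..<n} {..<n}) y c"
  proof (cases "c \<in> se_basis n")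
    case True
    then have C: "C \<subseteq> {..<n}" unfolding c se_basis_def by auto
    have "se_mult_volume n (se_mult_volume n y) c
        = perm_sign n u * clif_sign ({..<n} - C) {..<n} * se_mult_volume n y ({..<n} - C, u)"
      using True unfolding c se_mult_volume_def by simp
    also have "\<dots> = (perm_sign n u * perm_sign n u) * (clif_sign ({..<n} - C) {..<n} * clif_sign C {..<n}) * y c"
      using se_mult_volume_compl[OF True[unfolded c], of y] unfolding c by (simp add: mult_ac)
    also have "clif_sign ({..<n} - C) {..<n} * clif_sign C {..<n} = (clif_sign {..<n} {..<n} :: 'a)"
      using clif_sign_sym_diff_left[of "{..<n} - C" C "{..<n}", where 'a = 'a] C finite_subset[OF C]
      by (simp add: Un_absorb2)
    finally show ?thesis unfolding se_smult_def by (simp add: perm_sign_square)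
  next
    case False
    then show ?thesis using assms unfolding c se_mult_volume_def se_smult_def se_carrier_def by simp
  qed
qed

lemma se_mult_volume_homog:
  assumes "se_homog n d m"
  shows "se_homog n (d + n) (se_mult_volume n m)"
  unfolding se_homog_def
proof (intro conjI allI impI se_mult_volume_in_se_carrier)
  fix C u assume nonzero: "se_mult_volume n m (C, u) \<noteq> 0"
  then have "(C, u) \<in> se_basis n" unfolding se_mult_volume_def by (auto split: if_splits)
  then have C: "C \<subseteq> {..<n}" and "m ({..<n} - C, u) \<noteq> 0"
    using nonzero unfolding se_mult_volume_def se_basis_def by auto
  then have "even (card ({..<n} - C) + d)" using assms unfolding se_homog_def by blast
  moreover have "card ({..<n} - C) + card C = n"
    using C card_mono[OF finite_lessThan C] by (simp add: card_Diff_subset finite_subset)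
  ultimately show "even (card C + (d + n))" by presburger
qed

section \<open>The left ideals generated by \<open>e\<^sub>(\<^sub>n\<^sub>)\<close> and \<open>e\<^sub>(\<^sub>1\<^sup>n\<^sub>)\<close>\<close>

lemma sum_permutes_compose_eq:
  assumes S: "finite S" and w: "w permutes S"
  shows "(\<Sum>v | v permutes S. if w \<circ> v = u then f v else 0) = (if u permutes S then f (inv w \<circ> u) else 0)"
proof -
  have "w \<circ> v = u \<longleftrightarrow> v = inv w \<circ> u" for v
    using permutes_inv_o[OF w] by (metis comp_assoc comp_id id_comp)
  then have "(\<Sum>v | v permutes S. if w \<circ> v = u then f v else 0) = (\<Sum>v | v permutes S. if v = inv w \<circ> u then f v else 0)"
    by simp
  also have "\<dots> = (if inv w \<circ> u permutes S then f (inv w \<circ> u) else 0)"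
    using finite_permutations[OF S] by (simp add: sum.delta')
  also have "inv w \<circ> u permutes S \<longleftrightarrow> u permutes S"
    using permutes_compose[OF _ permutes_inv[OF w]] permutes_compose[OF _ w, of "inv w \<circ> u"]
      permutes_inv_o(1)[OF w] by (metis comp_assoc id_comp)
  finally show ?thesis .
qed

lemma se_mult_perm_combination:
  "se_mult n x (\<lambda>(A, w). if A = {} \<and> w permutes {..<n} then h w else 0) (C, u)
    = (if (C, u) \<in> se_basis n then (\<Sum>w | w permutes {..<n}. x (C, w) * h (inv w \<circ> u)) else 0)"
proof -
  define S where "S = se_basis n"
  define P where "P = {w. w permutes {..<n}}"
  define e where "e = (\<lambda>(A :: nat set, w). if A = {} \<and> w permutes {..<n} then h w else 0)"
  define F where "F p q = (case se_bmul p q of (s, r) \<Rightarrow> if r = (C, u) then s * x p * e q else 0)" for p q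
  have inner: "(\<Sum>q\<in>S. F (A, w) q) = (if A = C \<and> u \<in> P then x (A, w) * h (inv w \<circ> u) else 0)"
    if w: "w permutes {..<n}" for A w
  proof -
    have "(\<Sum>q\<in>S. F (A, w) q) = (\<Sum>q \<in> {{}} \<times> P. F (A, w) q)"
      by (rule sum.mono_neutral_right)
        (auto simp: S_def se_basis_eq P_def F_def e_def finite_permutations split: prod.splits)
    also have "\<dots> = (\<Sum>v\<in>P. F (A, w) ({}, v))"
    proof -
      have "{{}::nat set} \<times> P = Pair {} ` P" by auto
      then show ?thesis by (simp only:) (subst sum.reindex, auto simp: inj_on_def)
    qed
    also have "\<dots> = (\<Sum>v\<in>P. if w \<circ> v = u then (if A = C then x (A, w) * h v else 0) else 0)"
      by (rule sum.cong) (auto simp: F_def e_def P_def se_bmul_def conj_sign_def clif_sign_def)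
    also have "\<dots> = (if A = C \<and> u \<in> P then x (A, w) * h (inv w \<circ> u) else 0)"
      unfolding P_def
      using sum_permutes_compose_eq[OF finite_lessThan w, of u "\<lambda>v. if A = C then x (A, w) * h v else 0"]
      by simp
    finally show ?thesis .
  qed
  have "se_mult n x e (C, u) = (\<Sum>p\<in>S. \<Sum>q\<in>S. F p q)"
    unfolding se_mult_def S_def[symmetric] F_def by (simp add: sum.cartesian_product)
  also have "\<dots> = (\<Sum>p \<in> Pow {..<n} \<times> P. \<Sum>q\<in>S. F p q)"
    by (subst (1) S_def, unfold se_basis_eq P_def) (rule refl)
  also have "\<dots> = (\<Sum>A\<in>Pow {..<n}. \<Sum>w\<in>P. \<Sum>q\<in>S. F (A, w) q)"
    using sum.cartesian_product[of "\<lambda>A w. \<Sum>q\<in>S. F (A, w) q" P "Pow {..<n}"] by (simp add: split_def)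
  also have "\<dots> = (\<Sum>A\<in>Pow {..<n}. if A = C then (\<Sum>w\<in>P. if u \<in> P then x (C, w) * h (inv w \<circ> u) else 0) else 0)"
    by (rule sum.cong) (auto simp: inner P_def intro: sum.cong)
  also have "\<dots> = (if (C, u) \<in> se_basis n then (\<Sum>w | w permutes {..<n}. x (C, w) * h (inv w \<circ> u)) else 0)"
    by (simp add: se_basis_eq P_def)
  finally show ?thesis unfolding e_def .
qed

definition perm_idempotent :: "nat \<Rightarrow> ((nat \<Rightarrow> nat) \<Rightarrow> 'a) \<Rightarrow> 'a::field se" where
  "perm_idempotent n \<chi> = (\<lambda>(A, w). if A = {} \<and> w permutes {..<n} then \<chi> w / of_nat (fact n) else 0)"

definition se_covariant :: "nat \<Rightarrow> ((nat \<Rightarrow> nat) \<Rightarrow> 'a) \<Rightarrow> 'a::field se set" where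
  "se_covariant n \<chi> = {y \<in> se_carrier n. \<forall>C u. u permutes {..<n} \<longrightarrow> y (C, u) = \<chi> u * y (C, id)}"

definition perm_character :: "nat \<Rightarrow> ((nat \<Rightarrow> nat) \<Rightarrow> 'a::monoid_mult) \<Rightarrow> bool" where
  "perm_character n \<chi> \<longleftrightarrow> \<chi> id = 1 \<and>
     (\<forall>w v. w permutes {..<n} \<longrightarrow> v permutes {..<n} \<longrightarrow> \<chi> (w \<circ> v) = \<chi> w * \<chi> v)"

lemma perm_character_inv:
  assumes "perm_character n \<chi>" "w permutes {..<n}" "u permutes {..<n}"
  shows "\<chi> (inv w \<circ> u) = \<chi> (inv w) * \<chi> u" and "\<chi> w * \<chi> (inv w) = 1"
proof -
  have id: "\<chi> id = 1"
    and mult: "\<And>w v. w permutes {..<n} \<Longrightarrow> v permutes {..<n} \<Longrightarrow> \<chi> (w \<circ> v) = \<chi> w * \<chi> v"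
    using assms(1) unfolding perm_character_def by blast+
  show "\<chi> (inv w \<circ> u) = \<chi> (inv w) * \<chi> u"
    using mult[OF permutes_inv[OF assms(2)] assms(3)] .
  show "\<chi> w * \<chi> (inv w) = 1"
    using mult[OF assms(2) permutes_inv[OF assms(2)]] permutes_inv_o(1)[OF assms(2)] id by simp
qed

lemma perm_character_perm_sign: "perm_character n (perm_sign n)"
  unfolding perm_character_def by (simp add: perm_sign_id perm_sign_compose)

lemma se_covariant_subset_se_carrier: "se_covariant n \<chi> \<subseteq> se_carrier n"
  unfolding se_covariant_def by blast

lemma se_covariantD: "y \<in> se_covariant n \<chi> \<Longrightarrow> u permutes {..<n} \<Longrightarrow> y (C, u) = \<chi> u * y (C, id)"
  unfolding se_covariant_def by blast

lemma e_triv_eq_perm_idempotent: "e_triv n = perm_idempotent n (\<lambda>_. 1)"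
  unfolding e_triv_def perm_idempotent_def by simp

lemma e_sgn_eq_perm_idempotent: "e_sgn n = perm_idempotent n (perm_sign n)"
  unfolding e_sgn_def perm_idempotent_def perm_sign_def by simp

lemma se_mult_perm_idempotent:
  "(C, u) \<in> se_basis n \<Longrightarrow> se_mult n x (perm_idempotent n \<chi>) (C, u)
    = (\<Sum>w | w permutes {..<n}. x (C, w) * \<chi> (inv w \<circ> u)) / of_nat (fact n)"
  using se_mult_perm_combination[of n x "\<lambda>w. \<chi> w / of_nat (fact n)" C u]
  unfolding perm_idempotent_def by (simp add: sum_divide_distrib)

lemma se_mult_perm_idempotent_covariant:
  assumes "perm_character n \<chi>"
  shows "se_mult n x (perm_idempotent n \<chi>) \<in> se_covariant n \<chi>"
proof -
  have "se_mult n x (perm_idempotent n \<chi>) (C, u) = \<chi> u * se_mult n x (perm_idempotent n \<chi>) (C, id)"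
    if u: "u permutes {..<n}" for C u
  proof (cases "C \<subseteq> {..<n}")
    case True
    then have basis: "(C, u) \<in> se_basis n" "(C, id) \<in> se_basis n"
      using u unfolding se_basis_def by (auto simp: permutes_id)
    have "(\<Sum>w | w permutes {..<n}. x (C, w) * \<chi> (inv w \<circ> u))
        = \<chi> u * (\<Sum>w | w permutes {..<n}. x (C, w) * \<chi> (inv w))"
      unfolding sum_distrib_left
      by (rule sum.cong) (simp_all add: perm_character_inv(1)[OF assms _ u] mult_ac)
    then show ?thesis
      using assms unfolding se_mult_perm_idempotent[OF basis(1)] se_mult_perm_idempotent[OF basis(2)]
      by (simp add: perm_character_def)
  next
    case False
    then show ?thesis
      using se_mult_in_se_carrier[of n x] unfolding se_carrier_def se_basis_def by auto
  qed
  then show ?thesis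
    unfolding se_covariant_def using se_mult_in_se_carrier by blast
qed

lemma se_mult_perm_idempotent_fixes_covariant:
  fixes \<chi> :: "(nat \<Rightarrow> nat) \<Rightarrow> 'a::field_char_0"
  assumes \<chi>: "perm_character n \<chi>" and y: "y \<in> se_covariant n \<chi>"
  shows "se_mult n y (perm_idempotent n \<chi>) = y"
proof
  fix c :: "nat set \<times> (nat \<Rightarrow> nat)"
  show "se_mult n y (perm_idempotent n \<chi>) c = y c"
  proof (cases "c \<in> se_basis n")
    case True
    obtain C u where c: "c = (C, u)" by fastforce
    have u: "u permutes {..<n}" using True unfolding c se_basis_def by auto
    have "se_mult n y (perm_idempotent n \<chi>) c
        = (\<Sum>w | w permutes {..<n}. y (C, w) * \<chi> (inv w \<circ> u)) / of_nat (fact n)"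
      unfolding c by (rule se_mult_perm_idempotent[OF True[unfolded c]])
    also have "\<dots> = (\<Sum>w | w permutes {..<n}. \<chi> u * y (C, id)) / of_nat (fact n)"
    proof (intro arg_cong2[where f = "(/)"] sum.cong refl)
      fix w assume "w \<in> {w. w permutes {..<n}}"
      then have w: "w permutes {..<n}" by simp
      have "y (C, w) * \<chi> (inv w \<circ> u) = (\<chi> w * \<chi> (inv w)) * (\<chi> u * y (C, id))"
        using se_covariantD[OF y w] perm_character_inv(1)[OF \<chi> w u] by (simp add: mult_ac)
      then show "y (C, w) * \<chi> (inv w \<circ> u) = \<chi> u * y (C, id)"
        using perm_character_inv(2)[OF \<chi> w u] by simp
    qed
    also have "\<dots> = y c"
      using se_covariantD[OF y u] unfolding c by (simp add: card_permutations)
    finally show ?thesis .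
  next
    case False
    have "y c = 0" "se_mult n y (perm_idempotent n \<chi>) c = 0"
      using False y se_covariant_subset_se_carrier[of n \<chi>] se_mult_in_se_carrier[of n y]
      unfolding se_carrier_def by blast+
    then show ?thesis by simp
  qed
qed

lemma se_left_ideal_perm_idempotent:
  fixes \<chi> :: "(nat \<Rightarrow> nat) \<Rightarrow> 'a::field_char_0"
  assumes "perm_character n \<chi>"
  shows "se_left_ideal n (perm_idempotent n \<chi>) = se_covariant n \<chi>"
proof (intro set_eqI iffI)
  fix y :: "'a se"
  show "y \<in> se_covariant n \<chi>" if "y \<in> se_left_ideal n (perm_idempotent n \<chi>)"
    using that se_mult_perm_idempotent_covariant[OF assms] unfolding se_left_ideal_def by blast
  show "y \<in> se_left_ideal n (perm_idempotent n \<chi>)" if "y \<in> se_covariant n \<chi>"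
    using se_mult_perm_idempotent_fixes_covariant[OF assms that] that se_covariant_subset_se_carrier
    unfolding se_left_ideal_def by force
qed

lemma se_mult_volume_covariant:
  assumes y: "y \<in> se_covariant n \<chi>" and \<chi>': "\<And>u. u permutes {..<n} \<Longrightarrow> \<chi>' u = perm_sign n u * \<chi> u"
  shows "se_mult_volume n y \<in> se_covariant n \<chi>'"
proof -
  have "se_mult_volume n y (C, u) = \<chi>' u * se_mult_volume n y (C, id)" if u: "u permutes {..<n}" for C u
    using se_covariantD[OF y u, of "{..<n} - C"] \<chi>'[OF u] u permutes_id[of "{..<n}"]
    unfolding se_mult_volume_def se_basis_def by (simp add: perm_sign_id mult_ac)
  then show ?thesis
    unfolding se_covariant_def using se_mult_volume_in_se_carrier by blast
qed

lemma se_smult_covariant: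
  assumes y: "y \<in> se_covariant n \<chi>"
  shows "se_smult a y \<in> se_covariant n \<chi>"
proof -
  have "se_smult a y (C, u) = \<chi> u * se_smult a y (C, id)" if "u permutes {..<n}" for C u
    unfolding se_smult_def using se_covariantD[OF y that, of C] by (simp add: mult.left_commute)
  moreover have "se_smult a y \<in> se_carrier n"
    using y unfolding se_covariant_def se_carrier_def se_smult_def by simp
  ultimately show ?thesis
    unfolding se_covariant_def by blast
qed

theorem lemma2:
  fixes n :: nat
  assumes "n \<ge> 1"
  shows "\<exists>f :: ('k::field_char_0) se \<Rightarrow> 'k se.
    bij_betw f (se_left_ideal n (e_triv n)) (se_left_ideal n (e_sgn n)) \<and>
    (\<forall>m1 \<in> se_left_ideal n (e_triv n). \<forall>m2 \<in> se_left_ideal n (e_triv n).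
        f (se_add m1 m2) = se_add (f m1) (f m2)) \<and>
    (\<forall>a. \<forall>m \<in> se_left_ideal n (e_triv n). f (se_smult a m) = se_smult a (f m)) \<and>
    (\<forall>x \<in> se_carrier n. \<forall>m \<in> se_left_ideal n (e_triv n).
        f (se_mult n x m) = se_mult n x (f m)) \<and>
    (\<forall>d. \<forall>m \<in> se_left_ideal n (e_triv n). se_homog n d m \<longrightarrow> se_homog n (d + n) (f m))"
proof -
  define \<epsilon> where "\<epsilon> = (clif_sign {..<n} {..<n} :: 'k)"
  have triv: "se_left_ideal n (e_triv n) = se_covariant n (\<lambda>_. 1 :: 'k)"
    unfolding e_triv_eq_perm_idempotent
    by (rule se_left_ideal_perm_idempotent) (simp add: perm_character_def)
  have sgn: "se_left_ideal n (e_sgn n) = se_covariant n (perm_sign n :: _ \<Rightarrow> 'k)"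
    unfolding e_sgn_eq_perm_idempotent by (rule se_left_ideal_perm_idempotent[OF perm_character_perm_sign])
  have inverse: "se_smult \<epsilon> (se_mult_volume n (se_mult_volume n y)) = y" if "y \<in> se_covariant n \<chi>" for y \<chi>
    using se_mult_volume_twice[OF subsetD[OF se_covariant_subset_se_carrier that]]
      clif_sign_square[of "{..<n}" "{..<n}", where 'a = 'k]
    unfolding \<epsilon>_def se_smult_def by (simp add: mult.assoc[symmetric])
  have "bij_betw (se_mult_volume n) (se_covariant n (\<lambda>_. 1)) (se_covariant n (perm_sign n :: _ \<Rightarrow> 'k))"
  proof (rule bij_betw_byWitness[where f' = "\<lambda>y. se_smult \<epsilon> (se_mult_volume n y)"])
    show "se_mult_volume n ` se_covariant n (\<lambda>_. 1) \<subseteq> se_covariant n (perm_sign n :: _ \<Rightarrow> 'k)"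
      by (auto intro: se_mult_volume_covariant)
    show "(\<lambda>y. se_smult \<epsilon> (se_mult_volume n y)) ` se_covariant n (perm_sign n) \<subseteq> se_covariant n (\<lambda>_. 1)"
      by (auto intro!: se_smult_covariant se_mult_volume_covariant simp: perm_sign_square)
  qed (simp_all add: inverse se_mult_volume_smult)
  then show ?thesis
    by (intro exI[of _ "se_mult_volume n"])
      (simp add: triv sgn se_mult_volume_add se_mult_volume_smult se_mult_volume_mult se_mult_volume_homog)
qed

end
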